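(* Let $A$ be a finite set of formulas over the signature of the theory of extensional constant arrays, all of whose literals are flat. If some derivation of the calculus CAEXT starting from the initial configuration $\langle A, \mathcal{I}_0, \pi_0\rangle$ ends in the configuration $\mathsf{unsat}$, then $A$ is unsatisfiable in the theory of extensional constant arrays, i.e. no interpretation satisfying the axioms (row-eq), (row-ne), (ext), (roc) satisfies $A$.
   Context: Theory. Many-sorted first-order logic with equality. There is an index sort $\sigma$, an element sort $\tau$, and an array sort $(\sigma\to\tau)$, with function symbols: read $a[i]$ of type $(\sigma\to\tau)\times\sigma\to\tau$, write $a\langle i\triangleleft u\rangle$ of type $(\sigma\to\tau)\times\sigma\times\tau\to(\sigma\to\tau)$, and constant array $\langle v\rangle$ of type $\tau\to(\sigma\to\tau)$ (no restriction on whether $\sigma$ is finite or infinite). The theory of extensional constant arrays consists of all interpretations satisfying: (row-eq) $\forall a,i,j,u.\ i\approx j\Rightarrow a\langle i\triangleleft u\rangle[j]\approx u$; (row-ne) $\forall a,i,j,u.\ i\not\approx j\Rightarrow a\langle i\triangleleft u\rangle[j]\approx a[j]$; (ext) $\forall a,b.\ a\approx b\Leftrightarrow \forall i.\ a[i]\approx b[i]$; (roc) $\forall i,v.\ \langle v\rangle[i]\approx v$. The empty theory treats all these symbols (and the array sort) as uninterpreted. A literal is flat if it is $\bot$, $p(x_1,\dots,x_n)$, $\neg p(x_1,\dots,x_n)$, $x\approx y$, $x\not\approx y$, or $x\approx f(x_1,\dots,x_n)$ with $x,y,x_i$ uninterpreted constants; array disequalities are written $\neg(a\approx c)$. $T(A)$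 is the set of terms occurring in $A$, and $T_{\mathcal A}(A)$ the set of array terms in $A$. Let $W(A)=\{a\langle i\triangleleft u\rangle[i]\approx u \mid a\langle i\triangleleft u\rangle\in T(A)\}$. Configurations. A configuration is either $\mathsf{unsat}$ or a triple $\langle A,\mathcal I,\pi\rangle$ where $A$ is a set of formulas, $\mathcal I$ is either the special value $\mathcal I_0=\mathsf{none}$ or an interpretation in the empty theory satisfying $A$, and $\pi$ is a map sending pairs $(a,t)$, with $a$ an array term and $t$ either a read term $b[i]$ or a constant array term $\langle v\rangle$, to either the undefined value $()$ or a pair $(r,c)$ with $r$ a formula and $c$ an array term. $\pi_0$ maps every pair to $()$. The initial configuration for $A$ is $\langle A,\mathcal I_0,\pi_0\rangle$. Reasons. For a configuration, $\mathcal R(a,t)$ is defined recursively: $\mathcal R(a,t)=()$ if $\pi(a,t)=()$; otherwise $\mathcal R(a,t)=\top$ if $t=a$ or $t=a[i]$ for some $i$; otherwise $\mathcal R(a,t)=\mathcal R(c,t)\wedge r$ where $\pi(a,t)=(r,c)$. Updated indices: $I(a,\langle v\rangle)=()$ if $\pi(a,\langle v\rangle)=()$; $I(a,\langle v\rangle)=\emptyset$ if $a=\langle v\rangle$; $I(a,\langle v\rangle)=I(b,\langle v\rangle)\cup\{j\}$ if $\pi(a,\langle v\rangle)=(\top,b)$ with $b=a\langle j\triangleleft u\rangle$ or $a=b\langle j\triangleleft u\rangle$ for some $u$; otherwise $I(a,\langle v\rangle)=I(c,\langle v\rangle)$ where $\pi(a,\langle v\rangle)=(r,c)$. "$\mathcal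 I\models\varphi$" refers to the current interpretation $\mathcal I$ (evaluated in the empty theory); rules with such a premise apply only when $\mathcal I\neq\mathcal I_0$. "Reset" means setting $(\mathcal I,\pi):=(\mathcal I_0,\pi_0)$. Rules of CAEXT (each modifies the current configuration $\langle A,\mathcal I,\pi\rangle$): Interp: if $\mathcal I=\mathcal I_0$ and $\mathcal I'$ is an empty-theory interpretation with $\mathcal I'\models A\cup W(A)$, set $\mathcal I:=\mathcal I'$. Conf: if $A\cup W(A)$ is unsatisfiable in the empty theory, derive $\mathsf{unsat}$. InitR: if $a[i]\in T(A)$, set $\pi(a,a[i]):=(\top,a)$. InitW: if $s=a\langle i\triangleleft u\rangle\in T(A)$, set $\pi(s,s[i]):=(\top,s)$. RowD: if $\mathcal I\models i\not\approx j$, $\pi(a\langle j\triangleleft u\rangle,b[i])\ne()$ and $\pi(a,b[i])=()$, set $\pi(a,b[i]):=(i\not\approx j,\ a\langle j\triangleleft u\rangle)$. RowU: if $\mathcal I\models i\not\approx j$, $a\langle j\triangleleft u\rangle\in T(A)$, $\pi(a,b[i])\ne()$ and $\pi(a\langle j\triangleleft u\rangle,b[i])=()$, set $\pi(a\langle j\triangleleft u\rangle,b[i]):=(i\not\approx j,\ a)$. EqR: if $\mathcal I\models a\approx c$, $a,c\in T_{\mathcal A}(A)$, $a\approx c\in T(A)$, $\pi(a,b[i])\ne()$, $\pi(c,b[i])=()$, set $\pi(c,b[i]):=(a\approx c,a)$. EqL: same premises with roles swapped ($\pi(c,b[i])\ne()$, $\pi(a,b[i])=()$), set $\pi(a,b[i]):=(a\approx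 c,c)$. CongR: if $\mathcal I\models i\approx k$, $\pi(a,b[i])\ne()$, $\pi(a,c[k])\ne()$, $\mathcal I\models b[i]\not\approx c[k]$, add $\mathcal R(a,b[i])\wedge\mathcal R(a,c[k])\wedge i\approx k\Rightarrow b[i]\approx c[k]$ to $A$ and reset. DisEq: if $\mathcal I\models a\not\approx c$, $a,c\in T_{\mathcal A}(A)$, $a\approx c\in T(A)$, and the index constant $k_{\{a,c\}}\notin T(A)$, add $a\not\approx c\Rightarrow a[k_{\{a,c\}}]\not\approx c[k_{\{a,c\}}]$ to $A$ (with $k_{\{a,c\}}$ a fresh index constant associated with the pair) and reset. Roc: if $\pi(\langle v\rangle,b[i])\ne()$ and $\mathcal I\models b[i]\not\approx v$, add $\mathcal R(\langle v\rangle,b[i])\Rightarrow b[i]\approx v$ to $A$ and reset. InitC: if $\langle v\rangle\in T(A)$, set $\pi(\langle v\rangle,\langle v\rangle):=(\top,\langle v\rangle)$. CowD: if $\pi(a\langle j\triangleleft u\rangle,\langle v\rangle)\ne()$, $\pi(a,\langle v\rangle)=()$ and $\mathcal I\models\exists i{:}\sigma.\bigwedge_{k\in I(a\langle j\triangleleft u\rangle,\langle v\rangle)\cup\{j\}} i\not\approx k$, set $\pi(a,\langle v\rangle):=(\top,a\langle j\triangleleft u\rangle)$. CowU: if $\pi(a,\langle v\rangle)\ne()$, $\pi(a\langle j\triangleleft u\rangle,\langle v\rangle)=()$, $a\langle j\triangleleft u\rangle\in T(A)$ and $\mathcal I\models\exists i{:}\sigma.\bigwedge_{k\in I(a,\langle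 v\rangle)\cup\{j\}} i\not\approx k$, set $\pi(a\langle j\triangleleft u\rangle,\langle v\rangle):=(\top,a)$. CEqR: if $\mathcal I\models a\approx c$, $a,c\in T_{\mathcal A}(A)$, $a\approx c\in T(A)$, $\pi(a,\langle v\rangle)\ne()$, $\pi(c,\langle v\rangle)=()$, set $\pi(c,\langle v\rangle):=(a\approx c,a)$. CEqL: same with roles swapped, set $\pi(a,\langle v\rangle):=(a\approx c,c)$. CongC: if $\pi(a,\langle v\rangle)\ne()$, $\pi(a,\langle w\rangle)\ne()$, $\mathcal I\models v\not\approx w$ and $\mathcal I\models\exists i{:}\sigma.\bigwedge_{k\in I(a,\langle v\rangle)\cup I(a,\langle w\rangle)} i\not\approx k$, add $\mathcal R(a,\langle v\rangle)\wedge\mathcal R(a,\langle w\rangle)\wedge\exists i{:}\sigma.\bigwedge_{k\in I(a,\langle v\rangle)\cup I(a,\langle w\rangle)} i\not\approx k\Rightarrow v\approx w$ to $A$ and reset. Conflict rules are CongR, DisEq, Roc, CongC. Whenever a rule introduces non-flat literals, they are flattened with fresh constants. A derivation is a sequence of configurations, starting from an initial one, each obtained from the previous by a rule application. *)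

theory Defs
  imports Main
begin

section \<open>Syntax\<close>

text \<open>Sorts: index sort sigma, element sort tau, array sort (sigma -> tau).\<close>
datatype sort = SIdx | SElem | SArr

text \<open>Constant names: ordinary names, and the designated index constants
  k_{a,c} introduced by the DisEq rule (associated with a pair of array terms).
  Terms: uninterpreted constants, variables (only used under the existential
  quantifier introduced by CongC), read a[i], write a<i <| u>, constant array <v>.\<close>
datatype name = Nm nat | Kc trm trm
  and trm = Cst name sort | Var nat sort | Rd trm trm | Wr trm trm trm | CA trm

datatype fm = FTop | FBot | FEq trm trm | FNot fm | FAnd fm fm | FOr fm fm
  | FImp fm fm | FEx nat sort fm

fun sort_of :: "trm \<Rightarrow> sort" where
  "sort_of (Cst _ s) = s"
| "sort_of (Var _ s) = s"
| "sort_of (Rd _ _) = SElem"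
| "sort_of (Wr _ _ _) = SArr"
| "sort_of (CA _) = SArr"

fun wst :: "trm \<Rightarrow> bool" where
  "wst (Cst _ _) = True"
| "wst (Var _ _) = True"
| "wst (Rd a i) = (wst a \<and> wst i \<and> sort_of a = SArr \<and> sort_of i = SIdx)"
| "wst (Wr a i u) = (wst a \<and> wst i \<and> wst u \<and> sort_of a = SArr \<and> sort_of i = SIdx
                     \<and> sort_of u = SElem)"
| "wst (CA v) = (wst v \<and> sort_of v = SElem)"

fun wf_fm :: "fm \<Rightarrow> bool" where
  "wf_fm FTop = True"
| "wf_fm FBot = True"
| "wf_fm (FEq s t) = (wst s \<and> wst t \<and> sort_of s = sort_of t)"
| "wf_fm (FNot p) = wf_fm p"
| "wf_fm (FAnd p q) = (wf_fm p \<and> wf_fm q)"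
| "wf_fm (FOr p q) = (wf_fm p \<and> wf_fm q)"
| "wf_fm (FImp p q) = (wf_fm p \<and> wf_fm q)"
| "wf_fm (FEx _ _ p) = wf_fm p"

fun subt :: "trm \<Rightarrow> trm set" where
  "subt (Cst n s) = {Cst n s}"
| "subt (Var x s) = {Var x s}"
| "subt (Rd a i) = insert (Rd a i) (subt a \<union> subt i)"
| "subt (Wr a i u) = insert (Wr a i u) (subt a \<union> subt i \<union> subt u)"
| "subt (CA v) = insert (CA v) (subt v)"

fun tvars :: "trm \<Rightarrow> (nat \<times> sort) set" where
  "tvars (Cst _ _) = {}"
| "tvars (Var x s) = {(x, s)}"
| "tvars (Rd a i) = tvars a \<union> tvars i"
| "tvars (Wr a i u) = tvars a \<union> tvars i \<union> tvars u"
| "tvars (CA v) = tvars v"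

definition ground :: "trm \<Rightarrow> bool" where
  "ground t \<longleftrightarrow> tvars t = {}"

fun fvars :: "fm \<Rightarrow> (nat \<times> sort) set" where
  "fvars FTop = {}"
| "fvars FBot = {}"
| "fvars (FEq s t) = tvars s \<union> tvars t"
| "fvars (FNot p) = fvars p"
| "fvars (FAnd p q) = fvars p \<union> fvars q"
| "fvars (FOr p q) = fvars p \<union> fvars q"
| "fvars (FImp p q) = fvars p \<union> fvars q"
| "fvars (FEx x s p) = fvars p - {(x, s)}"

definition closed :: "fm \<Rightarrow> bool" where
  "closed p \<longleftrightarrow> fvars p = {}"

fun fterms :: "fm \<Rightarrow> trm set" where
  "fterms FTop = {}"
| "fterms FBot = {}"
| "fterms (FEq s t) = subt s \<union> subt t"
| "fterms (FNot p) = fterms p"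
| "fterms (FAnd p q) = fterms p \<union> fterms q"
| "fterms (FOr p q) = fterms p \<union> fterms q"
| "fterms (FImp p q) = fterms p \<union> fterms q"
| "fterms (FEx _ _ p) = fterms p"

definition T :: "fm set \<Rightarrow> trm set" where
  "T A = (\<Union>p\<in>A. fterms p)"

definition TA :: "fm set \<Rightarrow> trm set" where
  "TA A = {t \<in> T A. sort_of t = SArr}"

text \<open>Equality atoms occurring in a formula / set of formulas (for "a = c in T(A)").\<close>
fun fatoms :: "fm \<Rightarrow> (trm \<times> trm) set" where
  "fatoms FTop = {}"
| "fatoms FBot = {}"
| "fatoms (FEq s t) = {(s, t)}"
| "fatoms (FNot p) = fatoms p"
| "fatoms (FAnd p q) = fatoms p \<union> fatoms q"
| "fatoms (FOr p q) = fatoms p \<union> fatoms q"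
| "fatoms (FImp p q) = fatoms p \<union> fatoms q"
| "fatoms (FEx _ _ p) = fatoms p"

definition atoms :: "fm set \<Rightarrow> (trm \<times> trm) set" where
  "atoms A = (\<Union>p\<in>A. fatoms p)"

definition W :: "fm set \<Rightarrow> fm set" where
  "W A = {FEq (Rd (Wr a i u) i) u | a i u. Wr a i u \<in> T A}"

section \<open>Flat literals and flattening\<close>

text \<open>Uninterpreted constants (and, for the bound index variable of CongC, variables).\<close>
fun atomic :: "trm \<Rightarrow> bool" where
  "atomic (Cst _ _) = True"
| "atomic (Var _ _) = True"
| "atomic _ = False"

fun app_atomic :: "trm \<Rightarrow> bool" where
  "app_atomic (Rd a i) = (atomic a \<and> atomic i)"
| "app_atomic (Wr a i u) = (atomic a \<and> atomic i \<and> atomic u)"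
| "app_atomic (CA v) = atomic v"
| "app_atomic _ = False"

text \<open>Flat literals: bottom, x = y, x ~= y, x = f(x1,...,xn).  Negative literals are
  FNot applied to an atom; the truth constant FTop (used in reasons) is harmless.\<close>
fun flat_fm :: "fm \<Rightarrow> bool" where
  "flat_fm FTop = True"
| "flat_fm FBot = True"
| "flat_fm (FEq s t) = (atomic s \<and> (atomic t \<or> app_atomic t))"
| "flat_fm (FNot (FEq s t)) = (atomic s \<and> atomic t)"
| "flat_fm (FNot FBot) = True"
| "flat_fm (FNot FTop) = True"
| "flat_fm (FNot p) = flat_fm p"
| "flat_fm (FAnd p q) = (flat_fm p \<and> flat_fm q)"
| "flat_fm (FOr p q) = (flat_fm p \<and> flat_fm q)"
| "flat_fm (FImp p q) = (flat_fm p \<and> flat_fm q)"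
| "flat_fm (FEx _ _ p) = flat_fm p"

fun nonflat_terms :: "fm \<Rightarrow> trm set" where
  "nonflat_terms FTop = {}"
| "nonflat_terms FBot = {}"
| "nonflat_terms (FEq s t) =
     (if atomic s \<and> (atomic t \<or> app_atomic t) then {} else subt s \<union> subt t)"
| "nonflat_terms (FNot (FEq s t)) =
     (if atomic s \<and> atomic t then {} else subt s \<union> subt t)"
| "nonflat_terms (FNot FBot) = {}"
| "nonflat_terms (FNot FTop) = {}"
| "nonflat_terms (FNot p) = nonflat_terms p"
| "nonflat_terms (FAnd p q) = nonflat_terms p \<union> nonflat_terms q"
| "nonflat_terms (FOr p q) = nonflat_terms p \<union> nonflat_terms q"
| "nonflat_terms (FImp p q) = nonflat_terms p \<union> nonflat_terms q"
| "nonflat_terms (FEx _ _ p) = nonflat_terms p"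

fun rept :: "trm \<Rightarrow> trm \<Rightarrow> trm \<Rightarrow> trm" where
  "rept t c s = (if s = t then c else
     (case s of Rd a i \<Rightarrow> Rd (rept t c a) (rept t c i)
      | Wr a i u \<Rightarrow> Wr (rept t c a) (rept t c i) (rept t c u)
      | CA v \<Rightarrow> CA (rept t c v)
      | _ \<Rightarrow> s))"

fun repf :: "trm \<Rightarrow> trm \<Rightarrow> fm \<Rightarrow> fm" where
  "repf t c FTop = FTop"
| "repf t c FBot = FBot"
| "repf t c (FEq s u) = FEq (rept t c s) (rept t c u)"
| "repf t c (FNot p) = FNot (repf t c p)"
| "repf t c (FAnd p q) = FAnd (repf t c p) (repf t c q)"
| "repf t c (FOr p q) = FOr (repf t c p) (repf t c q)"
| "repf t c (FImp p q) = FImp (repf t c p) (repf t c q)"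
| "repf t c (FEx x s p) = FEx x s (repf t c p)"

definition flat_step :: "fm set \<Rightarrow> fm set \<Rightarrow> fm set \<Rightarrow> bool" where
  "flat_step A S S' \<longleftrightarrow>
     (\<exists>p\<in>S. \<exists>t n. t \<in> nonflat_terms p \<and> \<not> atomic t \<and> ground t \<and>
        Cst (Nm n) (sort_of t) \<notin> T (A \<union> S) \<and>
        S' = (S - {p}) \<union> {repf t (Cst (Nm n) (sort_of t)) p, FEq (Cst (Nm n) (sort_of t)) t})"

definition flattening :: "fm set \<Rightarrow> fm \<Rightarrow> fm set \<Rightarrow> bool" where
  "flattening A p S \<longleftrightarrow> (flat_step A)\<^sup>*\<^sup>* {p} S \<and> (\<forall>q\<in>S. flat_fm q)"

definition add_fm :: "fm set \<Rightarrow> fm \<Rightarrow> fm set \<Rightarrow> bool" where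
  "add_fm A p A' \<longleftrightarrow> (\<exists>S. flattening A p S \<and> A' = A \<union> S)"

section \<open>Semantics\<close>

text \<open>A many-sorted interpretation: a carrier for each sort (inside the universe 'u),
  interpretations of the constants and of read, write and constant-array.\<close>
record 'u interp =
  dm :: "sort \<Rightarrow> 'u set"
  cst :: "name \<Rightarrow> sort \<Rightarrow> 'u"
  rd :: "'u \<Rightarrow> 'u \<Rightarrow> 'u"
  wr :: "'u \<Rightarrow> 'u \<Rightarrow> 'u \<Rightarrow> 'u"
  ca :: "'u \<Rightarrow> 'u"

text \<open>Interpretations of the empty theory (all symbols uninterpreted).\<close>
definition is_interp :: "'u interp \<Rightarrow> bool" where
  "is_interp I \<longleftrightarrow>
     (\<forall>s. dm I s \<noteq> {}) \<and> (\<forall>n s. cst I n s \<in> dm I s) \<and>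
     (\<forall>a\<in>dm I SArr. \<forall>i\<in>dm I SIdx. rd I a i \<in> dm I SElem) \<and>
     (\<forall>a\<in>dm I SArr. \<forall>i\<in>dm I SIdx. \<forall>u\<in>dm I SElem. wr I a i u \<in> dm I SArr) \<and>
     (\<forall>v\<in>dm I SElem. ca I v \<in> dm I SArr)"

text \<open>Interpretations of the theory of extensional constant arrays:
  axioms (row-eq), (row-ne), (ext), (roc).\<close>
definition array_interp :: "'u interp \<Rightarrow> bool" where
  "array_interp I \<longleftrightarrow> is_interp I \<and>
     (\<forall>a\<in>dm I SArr. \<forall>i\<in>dm I SIdx. \<forall>j\<in>dm I SIdx. \<forall>u\<in>dm I SElem.
        i = j \<longrightarrow> rd I (wr I a i u) j = u) \<and>
     (\<forall>a\<in>dm I SArr. \<forall>i\<in>dm I SIdx. \<forall>j\<in>dm I SIdx. \<forall>u\<in>dm I SElem.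
        i \<noteq> j \<longrightarrow> rd I (wr I a i u) j = rd I a j) \<and>
     (\<forall>a\<in>dm I SArr. \<forall>b\<in>dm I SArr. a = b \<longleftrightarrow> (\<forall>i\<in>dm I SIdx. rd I a i = rd I b i)) \<and>
     (\<forall>i\<in>dm I SIdx. \<forall>v\<in>dm I SElem. rd I (ca I v) i = v)"

fun eval :: "'u interp \<Rightarrow> (nat \<times> sort \<Rightarrow> 'u) \<Rightarrow> trm \<Rightarrow> 'u" where
  "eval I \<nu> (Cst n s) = cst I n s"
| "eval I \<nu> (Var x s) = \<nu> (x, s)"
| "eval I \<nu> (Rd a i) = rd I (eval I \<nu> a) (eval I \<nu> i)"
| "eval I \<nu> (Wr a i u) = wr I (eval I \<nu> a) (eval I \<nu> i) (eval I \<nu> u)"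
| "eval I \<nu> (CA v) = ca I (eval I \<nu> v)"

fun sat :: "'u interp \<Rightarrow> (nat \<times> sort \<Rightarrow> 'u) \<Rightarrow> fm \<Rightarrow> bool" where
  "sat I \<nu> FTop = True"
| "sat I \<nu> FBot = False"
| "sat I \<nu> (FEq s t) = (eval I \<nu> s = eval I \<nu> t)"
| "sat I \<nu> (FNot p) = (\<not> sat I \<nu> p)"
| "sat I \<nu> (FAnd p q) = (sat I \<nu> p \<and> sat I \<nu> q)"
| "sat I \<nu> (FOr p q) = (sat I \<nu> p \<or> sat I \<nu> q)"
| "sat I \<nu> (FImp p q) = (sat I \<nu> p \<longrightarrow> sat I \<nu> q)"
| "sat I \<nu> (FEx x s p) = (\<exists>d\<in>dm I s. sat I (\<nu>((x, s) := d)) p)"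

definition holds :: "'u interp \<Rightarrow> fm \<Rightarrow> bool" where
  "holds I p \<longleftrightarrow> sat I (\<lambda>(x, s). SOME d. d \<in> dm I s) p"

definition models :: "'u interp \<Rightarrow> fm set \<Rightarrow> bool" where
  "models I A \<longleftrightarrow> is_interp I \<and> (\<forall>p\<in>A. holds I p)"

section \<open>The calculus CAEXT\<close>

type_synonym pimap = "trm \<times> trm \<Rightarrow> (fm \<times> trm) option"

datatype 'u cfg = Unsat | Cfg "fm set" "'u interp option" pimap

definition pi0 :: pimap where "pi0 = (\<lambda>_. None)"

definition init_cfg :: "fm set \<Rightarrow> 'u cfg" where
  "init_cfg A = Cfg A None pi0"

text \<open>Reasons R(a,t): the relation "reason pi a t r" holds iff R(a,t) = r (R(a,t) defined).\<close>
inductive reason :: "pimap \<Rightarrow> trm \<Rightarrow> trm \<Rightarrow> fm \<Rightarrow> bool" for \<pi> where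
  rbase: "\<pi> (a, t) \<noteq> None \<Longrightarrow> (t = a \<or> (\<exists>i. t = Rd a i)) \<Longrightarrow> reason \<pi> a t FTop"
| rstep: "\<pi> (a, t) = Some (r, c) \<Longrightarrow> \<not> (t = a \<or> (\<exists>i. t = Rd a i)) \<Longrightarrow>
          reason \<pi> c t p \<Longrightarrow> reason \<pi> a t (FAnd p r)"

text \<open>Updated indices I(a,<v>): "updidx pi a t K" holds iff I(a,t) = K (defined).\<close>
inductive updidx :: "pimap \<Rightarrow> trm \<Rightarrow> trm \<Rightarrow> trm set \<Rightarrow> bool" for \<pi> where
  ubase: "\<pi> (a, t) \<noteq> None \<Longrightarrow> a = t \<Longrightarrow> updidx \<pi> a t {}"
| uwr: "\<pi> (a, t) = Some (FTop, b) \<Longrightarrow> a \<noteq> t \<Longrightarrow>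
        (\<exists>u. b = Wr a j u \<or> a = Wr b j u) \<Longrightarrow>
        updidx \<pi> b t K \<Longrightarrow> updidx \<pi> a t (insert j K)"
| uoth: "\<pi> (a, t) = Some (r, c) \<Longrightarrow> a \<noteq> t \<Longrightarrow>
        \<not> (r = FTop \<and> (\<exists>j u. c = Wr a j u \<or> a = Wr c j u)) \<Longrightarrow>
        updidx \<pi> c t K \<Longrightarrow> updidx \<pi> a t K"

definition conjs :: "fm list \<Rightarrow> fm" where
  "conjs ps = foldr FAnd ps FTop"

definition ex_avoid :: "'u interp \<Rightarrow> trm set \<Rightarrow> bool" where
  "ex_avoid J K \<longleftrightarrow>
     (\<exists>d\<in>dm J SIdx. \<forall>k\<in>K. d \<noteq> eval J (\<lambda>(x, s). SOME e. e \<in> dm J s) k)"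

inductive step :: "'u cfg \<Rightarrow> 'u cfg \<Rightarrow> bool" where
  Interp: "models (J :: 'u interp) (A \<union> W A) \<Longrightarrow> step (Cfg A None \<pi>) (Cfg A (Some J) \<pi>)"
| Conf: "\<not> (\<exists>J :: 'u interp. models J (A \<union> W A)) \<Longrightarrow> step (Cfg A I \<pi>) Unsat"
| InitR: "Rd a i \<in> T A \<Longrightarrow> step (Cfg A I \<pi>) (Cfg A I (\<pi>((a, Rd a i) := Some (FTop, a))))"
| InitW: "Wr a i u \<in> T A \<Longrightarrow>
          step (Cfg A I \<pi>) (Cfg A I (\<pi>((Wr a i u, Rd (Wr a i u) i) := Some (FTop, Wr a i u))))"
| RowD: "holds J (FNot (FEq i j)) \<Longrightarrow> \<pi> (Wr a j u, Rd b i) \<noteq> None \<Longrightarrow> \<pi> (a, Rd b i) = None \<Longrightarrow>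
         step (Cfg A (Some J) \<pi>)
              (Cfg A (Some J) (\<pi>((a, Rd b i) := Some (FNot (FEq i j), Wr a j u))))"
| RowU: "holds J (FNot (FEq i j)) \<Longrightarrow> Wr a j u \<in> T A \<Longrightarrow> \<pi> (a, Rd b i) \<noteq> None \<Longrightarrow>
         \<pi> (Wr a j u, Rd b i) = None \<Longrightarrow>
         step (Cfg A (Some J) \<pi>)
              (Cfg A (Some J) (\<pi>((Wr a j u, Rd b i) := Some (FNot (FEq i j), a))))"
| EqR: "holds J (FEq a c) \<Longrightarrow> a \<in> TA A \<Longrightarrow> c \<in> TA A \<Longrightarrow> (a, c) \<in> atoms A \<Longrightarrow>
        \<pi> (a, Rd b i) \<noteq> None \<Longrightarrow> \<pi> (c, Rd b i) = None \<Longrightarrow>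
        step (Cfg A (Some J) \<pi>) (Cfg A (Some J) (\<pi>((c, Rd b i) := Some (FEq a c, a))))"
| EqL: "holds J (FEq a c) \<Longrightarrow> a \<in> TA A \<Longrightarrow> c \<in> TA A \<Longrightarrow> (a, c) \<in> atoms A \<Longrightarrow>
        \<pi> (c, Rd b i) \<noteq> None \<Longrightarrow> \<pi> (a, Rd b i) = None \<Longrightarrow>
        step (Cfg A (Some J) \<pi>) (Cfg A (Some J) (\<pi>((a, Rd b i) := Some (FEq a c, c))))"
| CongR: "holds J (FEq i k) \<Longrightarrow> \<pi> (a, Rd b i) \<noteq> None \<Longrightarrow> \<pi> (a, Rd c k) \<noteq> None \<Longrightarrow>
          holds J (FNot (FEq (Rd b i) (Rd c k))) \<Longrightarrow>
          reason \<pi> a (Rd b i) r1 \<Longrightarrow> reason \<pi> a (Rd c k) r2 \<Longrightarrow>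
          add_fm A (FImp (FAnd r1 (FAnd r2 (FEq i k))) (FEq (Rd b i) (Rd c k))) A' \<Longrightarrow>
          step (Cfg A (Some J) \<pi>) (Cfg A' None pi0)"
| DisEq: "holds J (FNot (FEq a c)) \<Longrightarrow> a \<in> TA A \<Longrightarrow> c \<in> TA A \<Longrightarrow> (a, c) \<in> atoms A \<Longrightarrow>
          Cst (Kc a c) SIdx \<notin> T A \<Longrightarrow> Cst (Kc c a) SIdx \<notin> T A \<Longrightarrow>
          add_fm A (FImp (FNot (FEq a c))
                     (FNot (FEq (Rd a (Cst (Kc a c) SIdx)) (Rd c (Cst (Kc a c) SIdx))))) A' \<Longrightarrow>
          step (Cfg A (Some J) \<pi>) (Cfg A' None pi0)"
| Roc: "\<pi> (CA v, Rd b i) \<noteq> None \<Longrightarrow> holds J (FNot (FEq (Rd b i) v)) \<Longrightarrow>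
        reason \<pi> (CA v) (Rd b i) r \<Longrightarrow>
        add_fm A (FImp r (FEq (Rd b i) v)) A' \<Longrightarrow>
        step (Cfg A (Some J) \<pi>) (Cfg A' None pi0)"
| InitC: "CA v \<in> T A \<Longrightarrow> step (Cfg A I \<pi>) (Cfg A I (\<pi>((CA v, CA v) := Some (FTop, CA v))))"
| CowD: "\<pi> (Wr a j u, CA v) \<noteq> None \<Longrightarrow> \<pi> (a, CA v) = None \<Longrightarrow>
         updidx \<pi> (Wr a j u) (CA v) K \<Longrightarrow> ex_avoid J (insert j K) \<Longrightarrow>
         step (Cfg A (Some J) \<pi>) (Cfg A (Some J) (\<pi>((a, CA v) := Some (FTop, Wr a j u))))"
| CowU: "\<pi> (a, CA v) \<noteq> None \<Longrightarrow> \<pi> (Wr a j u, CA v) = None \<Longrightarrow> Wr a j u \<in> T A \<Longrightarrow>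
         updidx \<pi> a (CA v) K \<Longrightarrow> ex_avoid J (insert j K) \<Longrightarrow>
         step (Cfg A (Some J) \<pi>) (Cfg A (Some J) (\<pi>((Wr a j u, CA v) := Some (FTop, a))))"
| CEqR: "holds J (FEq a c) \<Longrightarrow> a \<in> TA A \<Longrightarrow> c \<in> TA A \<Longrightarrow> (a, c) \<in> atoms A \<Longrightarrow>
         \<pi> (a, CA v) \<noteq> None \<Longrightarrow> \<pi> (c, CA v) = None \<Longrightarrow>
         step (Cfg A (Some J) \<pi>) (Cfg A (Some J) (\<pi>((c, CA v) := Some (FEq a c, a))))"
| CEqL: "holds J (FEq a c) \<Longrightarrow> a \<in> TA A \<Longrightarrow> c \<in> TA A \<Longrightarrow> (a, c) \<in> atoms A \<Longrightarrow>
         \<pi> (c, CA v) \<noteq> None \<Longrightarrow> \<pi> (a, CA v) = None \<Longrightarrow>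
         step (Cfg A (Some J) \<pi>) (Cfg A (Some J) (\<pi>((a, CA v) := Some (FEq a c, c))))"
| CongC: "\<pi> (a, CA v) \<noteq> None \<Longrightarrow> \<pi> (a, CA w) \<noteq> None \<Longrightarrow> holds J (FNot (FEq v w)) \<Longrightarrow>
          updidx \<pi> a (CA v) K1 \<Longrightarrow> updidx \<pi> a (CA w) K2 \<Longrightarrow> ex_avoid J (K1 \<union> K2) \<Longrightarrow>
          reason \<pi> a (CA v) r1 \<Longrightarrow> reason \<pi> a (CA w) r2 \<Longrightarrow>
          set ks = K1 \<union> K2 \<Longrightarrow> (\<forall>k\<in>set ks. (x, SIdx) \<notin> tvars k) \<Longrightarrow>
          add_fm A (FImp (FAnd r1 (FAnd r2
                      (FEx x SIdx (conjs (map (\<lambda>k. FNot (FEq (Var x SIdx) k)) ks)))))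
                    (FEq v w)) A' \<Longrightarrow>
          step (Cfg A (Some J) \<pi>) (Cfg A' None pi0)"

end

theory Submission
  imports Defs "HOL-Library.Countable_Set" "HOL-Library.FuncSet" "HOL-Combinatorics.Transposition"
begin

text \<open>
  Soundness rests on an invariant of configurations: the formulas of \<open>A\<close> are well sorted and
  have a model of the array theory, and every entry \<open>\<pi>(a, t) = (r, c)\<close> is sound. For a read
  \<open>t = b[i]\<close> this means that \<open>r\<close> entails \<open>a[i] = c[i]\<close> in all array models; for a constant
  array \<open>t = \<langle>v\<rangle>\<close>, either \<open>r\<close> entails \<open>a = c\<close>, or \<open>r = \<top>\<close> and \<open>a\<close>, \<open>c\<close> differ by a single
  write. Following chains of entries, a reason \<open>R(a, b[i])\<close> entails \<open>a[i] = b[i]\<close>, and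
  \<open>R(a, \<langle>v\<rangle>)\<close> entails \<open>a[k] = v\<close> at every index \<open>k\<close> avoiding \<open>I(a, \<langle>v\<rangle>)\<close>. Hence the lemmas
  added by CongR, Roc and CongC are valid, the lemma added by DisEq holds once its fresh index
  constant denotes an index where \<open>a\<close> and \<open>c\<close> differ (extensionality), and flattening only
  names ground terms by fresh constants. So Conf never applies: the countable Skolem hull of an
  array model of \<open>A\<close>, copied into the infinite universe of the calculus, is a model of
  \<open>A \<union> W(A)\<close> in the empty theory.
\<close>

section \<open>Terms, formulas and their values\<close>

lemma trm_induct [case_names Cst Var Rd Wr CA]:
  assumes "\<And>n s. P (Cst n s)" "\<And>x s. P (Var x s)" "\<And>a i. P a \<Longrightarrow> P i \<Longrightarrow> P (Rd a i)"
    "\<And>a i u. P a \<Longrightarrow> P i \<Longrightarrow> P u \<Longrightarrow> P (Wr a i u)" "\<And>v. P v \<Longrightarrow> P (CA v)"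
  shows "P t"
  by (rule trm.induct[of "\<lambda>_. True" P]) (use assms in auto)

lemma subt_refl [simp]: "t \<in> subt t"
  by (cases t) auto

lemma subt_trans: "u \<in> subt t \<Longrightarrow> subt u \<subseteq> subt t"
  by (induction t rule: trm_induct) auto

lemma wst_subt: "wst t \<Longrightarrow> u \<in> subt t \<Longrightarrow> wst u"
  by (induction t rule: trm_induct) auto

lemma subt_fterms: "u \<in> fterms p \<Longrightarrow> subt u \<subseteq> fterms p"
  by (induction p) (auto dest: subt_trans)

lemma wst_fterms: "wf_fm p \<Longrightarrow> u \<in> fterms p \<Longrightarrow> wst u"
  by (induction p) (auto dest: wst_subt)

lemma subt_T: "u \<in> T A \<Longrightarrow> subt u \<subseteq> T A"
  unfolding T_def by (auto dest: subt_fterms)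

lemma wst_T: "\<forall>p\<in>A. wf_fm p \<Longrightarrow> u \<in> T A \<Longrightarrow> wst u"
  unfolding T_def by (auto dest: wst_fterms)

lemma nonflat_terms_fterms: "nonflat_terms p \<subseteq> fterms p"
  by (induction p rule: nonflat_terms.induct) auto

lemma finite_tvars: "finite (tvars t)"
  by (induction t rule: trm_induct) auto

lemma finite_fvars: "finite (fvars p)"
  by (induction p) (auto simp: finite_tvars)

lemma eval_cong: "(\<And>v. v \<in> tvars t \<Longrightarrow> \<mu> v = \<mu>' v) \<Longrightarrow> eval I \<mu> t = eval I \<mu>' t"
  by (induction t rule: trm_induct) auto

lemma sat_cong: "(\<And>v. v \<in> fvars p \<Longrightarrow> \<mu> v = \<mu>' v) \<Longrightarrow> sat I \<mu> p = sat I \<mu>' p"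
proof (induction p arbitrary: \<mu> \<mu>')
  case (FEq s t)
  then show ?case using eval_cong[of s \<mu> \<mu>' I] eval_cong[of t \<mu> \<mu>' I] by auto
next
  case (FNot p)
  show ?case using FNot.IH[of \<mu> \<mu>'] FNot.prems by simp
next
  case (FAnd p q)
  show ?case using FAnd.IH(1)[of \<mu> \<mu>'] FAnd.IH(2)[of \<mu> \<mu>'] FAnd.prems by simp
next
  case (FOr p q)
  show ?case using FOr.IH(1)[of \<mu> \<mu>'] FOr.IH(2)[of \<mu> \<mu>'] FOr.prems by simp
next
  case (FImp p q)
  show ?case using FImp.IH(1)[of \<mu> \<mu>'] FImp.IH(2)[of \<mu> \<mu>'] FImp.prems by simp
next
  case (FEx x s p)
  have "sat I (\<mu>((x, s) := d)) p = sat I (\<mu>'((x, s) := d)) p" for d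
    by (rule FEx.IH) (use FEx.prems in auto)
  then show ?case by simp
qed simp_all

lemma eval_in_dm:
  "is_interp I \<Longrightarrow> (\<And>v. \<mu> v \<in> dm I (snd v)) \<Longrightarrow> wst t \<Longrightarrow> eval I \<mu> t \<in> dm I (sort_of t)"
  by (induction t rule: trm_induct) (auto simp: is_interp_def)

text \<open>
  \<^const>\<open>holds\<close> evaluates free variables by a fixed element of each carrier. This matters: the
  calculus may add formulas with free variables, since terms under a binder of \<open>A\<close> occur
  in \<open>T(A)\<close>.
\<close>

definition dflt :: "'a interp \<Rightarrow> sort \<Rightarrow> 'a" where
  "dflt I s = (SOME d. d \<in> dm I s)"

definition dval :: "'a interp \<Rightarrow> nat \<times> sort \<Rightarrow> 'a" where
  "dval I = (\<lambda>(x, s). dflt I s)"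

definition tval :: "'a interp \<Rightarrow> trm \<Rightarrow> 'a" where
  "tval I t = eval I (dval I) t"

lemma holds_dval: "holds I p = sat I (dval I) p"
  by (simp add: holds_def dval_def dflt_def)

lemma dflt_in_dm: "is_interp I \<Longrightarrow> dflt I s \<in> dm I s"
  unfolding dflt_def is_interp_def by (simp add: some_in_eq)

lemma tval_in_dm: "is_interp I \<Longrightarrow> wst t \<Longrightarrow> tval I t \<in> dm I (sort_of t)"
  unfolding tval_def by (rule eval_in_dm) (auto simp: dval_def dflt_in_dm split: prod.split)

lemma tval_in_dm_sort: "is_interp I \<Longrightarrow> wst t \<Longrightarrow> sort_of t = s \<Longrightarrow> tval I t \<in> dm I s"
  using tval_in_dm by blast

lemma tval_simps [simp]:
  "tval I (Cst n s) = cst I n s"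
  "tval I (Rd a i) = rd I (tval I a) (tval I i)"
  "tval I (Wr a i u) = wr I (tval I a) (tval I i) (tval I u)"
  "tval I (CA v) = ca I (tval I v)"
  by (simp_all add: tval_def)

lemma holds_simps [simp]:
  "holds I FTop"
  "holds I (FEq s t) \<longleftrightarrow> tval I s = tval I t"
  "holds I (FNot p) \<longleftrightarrow> \<not> holds I p"
  "holds I (FAnd p q) \<longleftrightarrow> holds I p \<and> holds I q"
  "holds I (FImp p q) \<longleftrightarrow> (holds I p \<longrightarrow> holds I q)"
  by (simp_all add: holds_dval tval_def)

lemma eval_ground: "ground t \<Longrightarrow> eval I \<mu> t = tval I t"
  unfolding tval_def ground_def by (rule eval_cong) simp

lemma array_interp_is_interp: "array_interp I \<Longrightarrow> is_interp I"
  by (simp add: array_interp_def)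

lemma array_interpD:
  assumes "array_interp I"
  shows rd_wr_same_dm: "\<lbrakk>a \<in> dm I SArr; i \<in> dm I SIdx; u \<in> dm I SElem\<rbrakk> \<Longrightarrow> rd I (wr I a i u) i = u"
    and rd_wr_other_dm: "\<lbrakk>a \<in> dm I SArr; i \<in> dm I SIdx; j \<in> dm I SIdx; u \<in> dm I SElem; i \<noteq> j\<rbrakk>
      \<Longrightarrow> rd I (wr I a i u) j = rd I a j"
    and array_ext_dm: "\<lbrakk>a \<in> dm I SArr; b \<in> dm I SArr; a \<noteq> b\<rbrakk> \<Longrightarrow> \<exists>i\<in>dm I SIdx. rd I a i \<noteq> rd I b i"
    and rd_ca_dm: "\<lbrakk>v \<in> dm I SElem; i \<in> dm I SIdx\<rbrakk> \<Longrightarrow> rd I (ca I v) i = v"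
  using assms unfolding array_interp_def by blast+

lemma rd_wr_same:
  assumes I: "array_interp I" and "wst (Wr a j u)"
  shows "rd I (tval I (Wr a j u)) (tval I j) = tval I u"
  using assms by (simp add: rd_wr_same_dm[OF I] tval_in_dm_sort[OF array_interp_is_interp[OF I]])

lemma rd_wr_other:
  assumes I: "array_interp I" and "wst (Wr a j u)" "d \<in> dm I SIdx" "d \<noteq> tval I j"
  shows "rd I (tval I (Wr a j u)) d = rd I (tval I a) d"
  using assms by (simp add: rd_wr_other_dm[OF I] tval_in_dm_sort[OF array_interp_is_interp[OF I]])

lemma rd_ca:
  assumes I: "array_interp I" and "wst (CA v)" "d \<in> dm I SIdx"
  shows "rd I (tval I (CA v)) d = tval I v"
  using assms by (simp add: rd_ca_dm[OF I] tval_in_dm_sort[OF array_interp_is_interp[OF I]])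

lemma array_ext:
  assumes I: "array_interp I" and "wst a" "sort_of a = SArr" "wst c" "sort_of c = SArr"
    and "tval I a \<noteq> tval I c"
  obtains d where "d \<in> dm I SIdx" "rd I (tval I a) d \<noteq> rd I (tval I c) d"
proof -
  have "tval I a \<in> dm I SArr" "tval I c \<in> dm I SArr"
    using assms by (simp_all add: tval_in_dm_sort[OF array_interp_is_interp[OF I]])
  then show ?thesis using array_ext_dm[OF I] assms(6) that by blast
qed

section \<open>Fresh constants and flattening\<close>

definition upd_cst :: "'a interp \<Rightarrow> name \<Rightarrow> sort \<Rightarrow> 'a \<Rightarrow> 'a interp" where
  "upd_cst I n s d = I\<lparr>cst := \<lambda>m s'. if m = n \<and> s' = s then d else cst I m s'\<rparr>"

lemma upd_cst_simps [simp]: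
  "dm (upd_cst I n s d) = dm I" "rd (upd_cst I n s d) = rd I"
  "wr (upd_cst I n s d) = wr I" "ca (upd_cst I n s d) = ca I"
  "cst (upd_cst I n s d) m s' = (if m = n \<and> s' = s then d else cst I m s')"
  by (simp_all add: upd_cst_def)

lemma dval_upd_cst [simp]: "dval (upd_cst I n s d) = dval I"
  by (simp add: dval_def dflt_def)

lemma eval_upd_cst: "Cst n s \<notin> subt t \<Longrightarrow> eval (upd_cst I n s d) \<mu> t = eval I \<mu> t"
  by (induction t rule: trm_induct) auto

lemma tval_upd_cst: "Cst n s \<notin> subt t \<Longrightarrow> tval (upd_cst I n s d) t = tval I t"
  by (simp add: tval_def eval_upd_cst)

lemma holds_upd_cst: "Cst n s \<notin> fterms p \<Longrightarrow> holds (upd_cst I n s d) p = holds I p"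
proof -
  have "sat (upd_cst I n s d) \<mu> p = sat I \<mu> p" if "Cst n s \<notin> fterms p" for \<mu>
    using that by (induction p arbitrary: \<mu>) (auto simp: eval_upd_cst)
  then show "Cst n s \<notin> fterms p \<Longrightarrow> ?thesis" by (simp add: holds_dval)
qed

lemma array_interp_upd_cst: "array_interp I \<Longrightarrow> d \<in> dm I s \<Longrightarrow> array_interp (upd_cst I n s d)"
  by (auto simp: array_interp_def is_interp_def)

definition array_satisfiable :: "'a itself \<Rightarrow> fm set \<Rightarrow> bool" where
  "array_satisfiable _ A \<longleftrightarrow> (\<exists>I :: 'a interp. array_interp I \<and> (\<forall>p\<in>A. holds I p))"

lemma fresh_cst_model:
  assumes "array_interp I" "\<forall>q\<in>A. holds I q" "Cst n s \<notin> T A" "d \<in> dm I s"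
  shows "array_interp (upd_cst I n s d)" "\<forall>q\<in>A. holds (upd_cst I n s d) q"
  using assms by (auto simp: array_interp_upd_cst holds_upd_cst T_def)

declare rept.simps [simp del]

lemma rept_simps [simp]:
  "rept t c (Cst n s) = (if Cst n s = t then c else Cst n s)"
  "rept t c (Var x s) = (if Var x s = t then c else Var x s)"
  "rept t c (Rd a i) = (if Rd a i = t then c else Rd (rept t c a) (rept t c i))"
  "rept t c (Wr a i u) = (if Wr a i u = t then c else Wr (rept t c a) (rept t c i) (rept t c u))"
  "rept t c (CA v) = (if CA v = t then c else CA (rept t c v))"
  by (subst rept.simps; simp)+

lemma sort_of_rept: "sort_of c = sort_of t \<Longrightarrow> sort_of (rept t c u) = sort_of u"
  by (cases u) auto

lemma wst_rept: "sort_of c = sort_of t \<Longrightarrow> wst c \<Longrightarrow> wst u \<Longrightarrow> wst (rept t c u)"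
  by (induction u rule: trm_induct) (auto simp: sort_of_rept)

lemma eval_rept: "eval I \<mu> c = eval I \<mu> t \<Longrightarrow> eval I \<mu> (rept t c u) = eval I \<mu> u"
  by (induction u rule: trm_induct) auto

lemma wf_repf: "sort_of c = sort_of t \<Longrightarrow> wst c \<Longrightarrow> wf_fm p \<Longrightarrow> wf_fm (repf t c p)"
  by (induction p) (auto simp: wst_rept sort_of_rept)

lemma sat_repf: "(\<And>\<mu>. eval I \<mu> c = eval I \<mu> t) \<Longrightarrow> sat I \<mu> (repf t c p) = sat I \<mu> p"
  by (induction p arbitrary: \<mu>) (simp_all add: eval_rept)

lemma flat_step_sound:
  fixes I :: "'a interp"
  assumes step: "flat_step A S S'" and wf: "\<forall>q\<in>S. wf_fm q"
    and I: "array_interp I" "\<forall>q\<in>A \<union> S. holds I q"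
  shows "(\<forall>q\<in>S'. wf_fm q) \<and> array_satisfiable TYPE('a) (A \<union> S')"
proof -
  from step obtain p t n where p: "p \<in> S" and t: "t \<in> nonflat_terms p" "ground t"
    and fresh: "Cst (Nm n) (sort_of t) \<notin> T (A \<union> S)"
    and S': "S' = (S - {p}) \<union> {repf t (Cst (Nm n) (sort_of t)) p, FEq (Cst (Nm n) (sort_of t)) t}"
    unfolding flat_step_def by blast
  define c where "c = Cst (Nm n) (sort_of t)"
  have tp: "t \<in> fterms p" using t(1) nonflat_terms_fterms by blast
  have wst: "wst t" using wst_fterms[OF _ tp] wf p by blast
  have "c \<notin> subt t" using fresh subt_fterms[OF tp] p unfolding c_def T_def by blast
  define I' where "I' = upd_cst I (Nm n) (sort_of t) (tval I t)"
  have I': "array_interp I'" "\<forall>q\<in>A \<union> S. holds I' q"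
    unfolding I'_def using fresh_cst_model[OF I fresh] tval_in_dm[OF array_interp_is_interp[OF I(1)] wst]
    by auto
  have "tval I' t = tval I t"
    unfolding I'_def using \<open>c \<notin> subt t\<close> by (simp add: c_def tval_upd_cst)
  then have c_t: "eval I' \<mu> c = eval I' \<mu> t" for \<mu>
    using eval_ground[OF t(2), of I' \<mu>] by (simp add: I'_def c_def)
  have "holds I' (repf t c p)" "holds I' (FEq c t)"
    using I'(2) p c_t by (simp_all add: holds_dval sat_repf)
  then have "\<forall>q\<in>A \<union> S'. holds I' q" using S' I'(2) by (auto simp: c_def)
  moreover have "wf_fm (repf t c p)" "wf_fm (FEq c t)"
    using wf p wst by (simp_all add: c_def wf_repf)
  then have "\<forall>q\<in>S'. wf_fm q" using S' wf by (auto simp: c_def)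
  ultimately show ?thesis using I'(1) unfolding array_satisfiable_def by blast
qed

lemma add_fm_sound:
  fixes I :: "'a interp"
  assumes "add_fm A p A'" "\<forall>q\<in>A. wf_fm q" "wf_fm p"
    and "array_interp I" "\<forall>q\<in>A. holds I q" "holds I p"
  shows "(\<forall>q\<in>A'. wf_fm q) \<and> array_satisfiable TYPE('a) A'"
proof -
  obtain S where S: "(flat_step A)\<^sup>*\<^sup>* {p} S" and A': "A' = A \<union> S"
    using assms(1) unfolding add_fm_def flattening_def by blast
  have "(\<forall>q\<in>S. wf_fm q) \<and> array_satisfiable TYPE('a) (A \<union> S)"
    using S
  proof (induction rule: rtranclp_induct)
    case base
    then show ?case using assms(3-6) unfolding array_satisfiable_def by auto
  next
    case (step S S')
    then obtain I' :: "'a interp" where "array_interp I'" "\<forall>q\<in>A \<union> S. holds I' q"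
      unfolding array_satisfiable_def by blast
    then show ?case using flat_step_sound[OF step.hyps(2)] step.IH by blast
  qed
  then show ?thesis using A' assms(2) by auto
qed

section \<open>Downward Loewenheim-Skolem\<close>

instance sort :: countable by countable_datatype
instance name :: countable by countable_datatype
instance trm :: countable by countable_datatype
instance fm :: countable by countable_datatype

definition elems_of_sort :: "('s \<times> 'a) set \<Rightarrow> 's \<Rightarrow> 'a set" where
  "elems_of_sort X s = {e. (s, e) \<in> X}"

lemma elems_of_sort_iff [simp]: "e \<in> elems_of_sort X s \<longleftrightarrow> (s, e) \<in> X"
  by (simp add: elems_of_sort_def)

lemma countable_elems_of_sort: "countable X \<Longrightarrow> countable (elems_of_sort X s)"
proof (rule countable_subset)
  show "elems_of_sort X s \<subseteq> snd ` X" by (auto intro: rev_image_eqI)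
qed simp

(* Also in HOL-Analysis.Finite_Cartesian_Product, whose import would shadow closed from Defs. *)
lemma countable_PiE_finite:
  "finite I \<Longrightarrow> (\<And>i. i \<in> I \<Longrightarrow> countable (F i)) \<Longrightarrow> countable (Pi\<^sub>E I F)"
  by (induction I arbitrary: F rule: finite_induct) (auto simp: PiE_insert_eq)

definition ext_val :: "'a interp \<Rightarrow> (nat \<times> sort) set \<Rightarrow> (nat \<times> sort \<Rightarrow> 'a) \<Rightarrow> nat \<times> sort \<Rightarrow> 'a" where
  "ext_val I F f = (\<lambda>v. if v \<in> F then f v else dflt I (snd v))"

text \<open>
  A witness for \<open>\<exists>x. p\<close> depends only on the values \<open>f\<close> of its free variables (the others are
  fixed to defaults), so each stage of the hull adds only countably many witnesses.
\<close>

definition is_witness :: "'a interp \<Rightarrow> fm \<Rightarrow> nat \<Rightarrow> sort \<Rightarrow> (nat \<times> sort \<Rightarrow> 'a) \<Rightarrow> 'a \<Rightarrow> bool" where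
  "is_witness I p x s f d \<longleftrightarrow>
     d \<in> dm I s \<and> sat I ((ext_val I (fvars (FEx x s p)) f)((x, s) := d)) p"

definition witness :: "'a interp \<Rightarrow> fm \<Rightarrow> nat \<Rightarrow> sort \<Rightarrow> (nat \<times> sort \<Rightarrow> 'a) \<Rightarrow> 'a" where
  "witness I p x s f = (SOME d. is_witness I p x s f d)"

lemma is_witness_witness: "is_witness I p x s f d \<Longrightarrow> is_witness I p x s f (witness I p x s f)"
  unfolding witness_def by (rule someI)

definition skolem_step :: "'a interp \<Rightarrow> (sort \<times> 'a) set \<Rightarrow> (sort \<times> 'a) set" where
  "skolem_step I X = X
     \<union> (\<lambda>(a, i). (SElem, rd I a i)) ` (elems_of_sort X SArr \<times> elems_of_sort X SIdx)
     \<union> (\<lambda>(a, i, u). (SArr, wr I a i u)) `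
         (elems_of_sort X SArr \<times> elems_of_sort X SIdx \<times> elems_of_sort X SElem)
     \<union> (\<lambda>v. (SArr, ca I v)) ` elems_of_sort X SElem
     \<union> (\<Union>(p, x, s). (\<lambda>f. (s, witness I p x s f)) `
          {f \<in> Pi\<^sub>E (fvars (FEx x s p)) (\<lambda>v. elems_of_sort X (snd v)). \<exists>d. is_witness I p x s f d})"

definition skolem_stage :: "'a interp \<Rightarrow> nat \<Rightarrow> (sort \<times> 'a) set" where
  "skolem_stage I n = (skolem_step I ^^ n) (range (\<lambda>s. (s, dflt I s)) \<union> range (\<lambda>(n, s). (s, cst I n s)))"

definition skolem_hull :: "'a interp \<Rightarrow> (sort \<times> 'a) set" where
  "skolem_hull I = (\<Union>n. skolem_stage I n)"

lemma skolem_stage_Suc: "skolem_stage I (Suc n) = skolem_step I (skolem_stage I n)"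
  by (simp add: skolem_stage_def)

lemma countable_skolem_step:
  assumes "countable X"
  shows "countable (skolem_step I X)"
proof -
  have "countable (Pi\<^sub>E (fvars (FEx x s p)) (\<lambda>v. elems_of_sort X (snd v)))" for p x s
    by (rule countable_PiE_finite) (simp_all add: finite_fvars countable_elems_of_sort assms)
  then have "countable ((\<lambda>f. (s, witness I p x s f)) `
      {f \<in> Pi\<^sub>E (fvars (FEx x s p)) (\<lambda>v. elems_of_sort X (snd v)). \<exists>d. is_witness I p x s f d})" for p x s
    by (auto intro: countable_subset)
  then show ?thesis
    unfolding skolem_step_def using assms
    by (auto intro!: countable_UN countable_SIGMA simp: countable_elems_of_sort)
qed

lemma countable_skolem_hull: "countable (skolem_hull I)"
proof -
  have "countable (skolem_stage I n)" for n
    by (induction n) (simp_all add: skolem_stage_def countable_skolem_step)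
  then show ?thesis by (simp add: skolem_hull_def)
qed

lemma skolem_stage_mono: "m \<le> n \<Longrightarrow> skolem_stage I m \<subseteq> skolem_stage I n"
  by (rule lift_Suc_mono_le[of "skolem_stage I"]) (auto simp: skolem_stage_Suc skolem_step_def)

lemma skolem_hull_generated:
  assumes "finite F" "F \<subseteq> skolem_hull I" "\<And>X. F \<subseteq> X \<Longrightarrow> z \<in> skolem_step I X"
  shows "z \<in> skolem_hull I"
proof -
  obtain n where "F \<subseteq> (\<Union>i<n. skolem_stage I i)"
    using finite_countable_subset[OF assms(1)] assms(2) unfolding skolem_hull_def by blast
  also have "\<dots> \<subseteq> skolem_stage I n" by (simp add: UN_subset_iff skolem_stage_mono)
  finally have "z \<in> skolem_stage I (Suc n)" using assms(3) by (simp add: skolem_stage_Suc)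
  then show ?thesis unfolding skolem_hull_def by blast
qed

lemma dflt_in_skolem_hull: "(s, dflt I s) \<in> skolem_hull I"
  unfolding skolem_hull_def by (rule UN_I[of 0]) (simp_all add: skolem_stage_def)

lemma cst_in_skolem_hull: "(s, cst I n s) \<in> skolem_hull I"
  unfolding skolem_hull_def by (rule UN_I[of 0]) (auto simp: skolem_stage_def image_iff)

lemma rd_in_skolem_hull:
  assumes "(SArr, a) \<in> skolem_hull I" "(SIdx, i) \<in> skolem_hull I"
  shows "(SElem, rd I a i) \<in> skolem_hull I"
proof (rule skolem_hull_generated[of "{(SArr, a), (SIdx, i)}"])
  fix X assume "{(SArr, a), (SIdx, i)} \<subseteq> X"
  then have "(SElem, rd I a i) \<in> (\<lambda>(a, i). (SElem, rd I a i)) ` (elems_of_sort X SArr \<times> elems_of_sort X SIdx)"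
    by (intro image_eqI[where x="(a, i)"]) auto
  then show "(SElem, rd I a i) \<in> skolem_step I X" unfolding skolem_step_def by blast
qed (use assms in auto)

lemma wr_in_skolem_hull:
  assumes "(SArr, a) \<in> skolem_hull I" "(SIdx, i) \<in> skolem_hull I" "(SElem, u) \<in> skolem_hull I"
  shows "(SArr, wr I a i u) \<in> skolem_hull I"
proof (rule skolem_hull_generated[of "{(SArr, a), (SIdx, i), (SElem, u)}"])
  fix X assume "{(SArr, a), (SIdx, i), (SElem, u)} \<subseteq> X"
  then have "(SArr, wr I a i u) \<in> (\<lambda>(a, i, u). (SArr, wr I a i u)) `
      (elems_of_sort X SArr \<times> elems_of_sort X SIdx \<times> elems_of_sort X SElem)"
    by (intro image_eqI[where x="(a, i, u)"]) auto
  then show "(SArr, wr I a i u) \<in> skolem_step I X" unfolding skolem_step_def by blast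
qed (use assms in auto)

lemma ca_in_skolem_hull:
  assumes "(SElem, v) \<in> skolem_hull I"
  shows "(SArr, ca I v) \<in> skolem_hull I"
proof (rule skolem_hull_generated[of "{(SElem, v)}"])
  fix X assume "{(SElem, v)} \<subseteq> X"
  then have "(SArr, ca I v) \<in> (\<lambda>v. (SArr, ca I v)) ` elems_of_sort X SElem" by auto
  then show "(SArr, ca I v) \<in> skolem_step I X" unfolding skolem_step_def by blast
qed (use assms in auto)

lemma witness_in_skolem_hull:
  assumes \<mu>: "\<And>v. (snd v, \<mu> v) \<in> skolem_hull I" and ex: "sat I \<mu> (FEx x s p)"
  obtains e where "(s, e) \<in> skolem_hull I" "sat I (\<mu>((x, s) := e)) p"
proof -
  define F where "F = fvars (FEx x s p)"
  define f where "f = restrict \<mu> F"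
  have ext: "sat I ((ext_val I F f)((x, s) := d)) p = sat I (\<mu>((x, s) := d)) p" for d
    by (rule sat_cong) (auto simp: ext_val_def f_def F_def)
  from ex obtain d where "is_witness I p x s f d"
    unfolding is_witness_def F_def[symmetric] ext by auto
  then have w: "is_witness I p x s f (witness I p x s f)" by (rule is_witness_witness)
  have "(s, witness I p x s f) \<in> skolem_hull I"
  proof (rule skolem_hull_generated[of "(\<lambda>v. (snd v, \<mu> v)) ` F"])
    show "finite ((\<lambda>v. (snd v, \<mu> v)) ` F)" by (simp add: F_def finite_fvars)
    fix X assume "(\<lambda>v. (snd v, \<mu> v)) ` F \<subseteq> X"
    then have "f \<in> Pi\<^sub>E F (\<lambda>v. elems_of_sort X (snd v))" by (auto simp: f_def)
    then show "(s, witness I p x s f) \<in> skolem_step I X"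
      using w unfolding skolem_step_def F_def by blast
  qed (use \<mu> in auto)
  moreover have "sat I (\<mu>((x, s) := witness I p x s f)) p"
    using w unfolding is_witness_def F_def[symmetric] ext by blast
  ultimately show ?thesis by (rule that)
qed

lemma skolem_step_in_dm:
  assumes I: "is_interp I" and X: "\<And>s e. (s, e) \<in> X \<Longrightarrow> e \<in> dm I s"
    and z: "(s, e) \<in> skolem_step I X"
  shows "e \<in> dm I s"
  using z X I unfolding skolem_step_def is_interp_def
  by (auto dest: is_witness_witness simp: is_witness_def)

lemma skolem_hull_in_dm: "is_interp I \<Longrightarrow> (s, e) \<in> skolem_hull I \<Longrightarrow> e \<in> dm I s"
proof -
  assume I: "is_interp I"
  have "(s, e) \<in> skolem_stage I n \<Longrightarrow> e \<in> dm I s" for n s e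
  proof (induction n arbitrary: s e)
    case 0
    then show ?case using I by (auto simp: skolem_stage_def dflt_in_dm is_interp_def)
  next
    case (Suc n)
    from Suc.prems have "(s, e) \<in> skolem_step I (skolem_stage I n)" by (simp add: skolem_stage_Suc)
    then show ?case using skolem_step_in_dm[OF I, of "skolem_stage I n"] Suc.IH by blast
  qed
  then show "(s, e) \<in> skolem_hull I \<Longrightarrow> e \<in> dm I s" by (auto simp: skolem_hull_def)
qed

lemma eval_in_skolem_hull:
  "(\<And>v. (snd v, \<mu> v) \<in> skolem_hull I) \<Longrightarrow> wst t \<Longrightarrow> (sort_of t, eval I \<mu> t) \<in> skolem_hull I"
  by (induction t rule: trm_induct)
    (auto simp: cst_in_skolem_hull rd_in_skolem_hull wr_in_skolem_hull ca_in_skolem_hull)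

definition copy_interp :: "'a interp \<Rightarrow> (sort \<times> 'a) set \<Rightarrow> (sort \<times> 'a \<Rightarrow> 'b) \<Rightarrow> 'b interp" where
  "copy_interp I D h =
     \<lparr>dm = \<lambda>s. (\<lambda>e. h (s, e)) ` elems_of_sort D s,
      cst = \<lambda>n s. h (s, cst I n s),
      rd = \<lambda>x y. h (SElem, rd I (snd (inv_into D h x)) (snd (inv_into D h y))),
      wr = \<lambda>x y z. h (SArr, wr I (snd (inv_into D h x)) (snd (inv_into D h y)) (snd (inv_into D h z))),
      ca = \<lambda>x. h (SArr, ca I (snd (inv_into D h x)))\<rparr>"

lemma copy_interp_simps [simp]:
  assumes "inj_on h D"
  shows "(s, e) \<in> D \<Longrightarrow> h (s, e) \<in> dm (copy_interp I D h) s"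
    and "cst (copy_interp I D h) n s = h (s, cst I n s)"
    and "(SArr, a) \<in> D \<Longrightarrow> (SIdx, i) \<in> D \<Longrightarrow>
      rd (copy_interp I D h) (h (SArr, a)) (h (SIdx, i)) = h (SElem, rd I a i)"
    and "(SArr, a) \<in> D \<Longrightarrow> (SIdx, i) \<in> D \<Longrightarrow> (SElem, u) \<in> D \<Longrightarrow>
      wr (copy_interp I D h) (h (SArr, a)) (h (SIdx, i)) (h (SElem, u)) = h (SArr, wr I a i u)"
    and "(SElem, v) \<in> D \<Longrightarrow> ca (copy_interp I D h) (h (SElem, v)) = h (SArr, ca I v)"
  using assms by (auto simp: copy_interp_def)

lemma is_interp_copy_interp:
  assumes "inj_on h (skolem_hull I)"
  shows "is_interp (copy_interp I (skolem_hull I) h)"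
  unfolding is_interp_def
proof (intro conjI allI ballI)
  fix s show "dm (copy_interp I (skolem_hull I) h) s \<noteq> {}"
    using dflt_in_skolem_hull[of s I] by (auto simp: copy_interp_def)
next
  fix n s show "cst (copy_interp I (skolem_hull I) h) n s \<in> dm (copy_interp I (skolem_hull I) h) s"
    by (simp add: assms cst_in_skolem_hull)
qed (auto simp: copy_interp_def assms rd_in_skolem_hull wr_in_skolem_hull ca_in_skolem_hull)

lemma eval_copy_interp:
  assumes h: "inj_on h (skolem_hull I)" and \<mu>: "\<And>v. (snd v, \<mu> v) \<in> skolem_hull I" and "wst t"
  shows "eval (copy_interp I (skolem_hull I) h) (\<lambda>v. h (snd v, \<mu> v)) t = h (sort_of t, eval I \<mu> t)"
  using \<open>wst t\<close>
proof (induction t rule: trm_induct)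
  case (Rd a i)
  then show ?case using eval_in_skolem_hull[OF \<mu>, of a] eval_in_skolem_hull[OF \<mu>, of i] h by simp
next
  case (Wr a i u)
  then show ?case
    using eval_in_skolem_hull[OF \<mu>, of a] eval_in_skolem_hull[OF \<mu>, of i]
      eval_in_skolem_hull[OF \<mu>, of u] h by simp
next
  case (CA v)
  then show ?case using eval_in_skolem_hull[OF \<mu>, of v] h by simp
qed (simp_all add: h)

lemma sat_copy_interp:
  assumes I: "is_interp I" and h: "inj_on h (skolem_hull I)"
    and "wf_fm p" and "\<And>v. (snd v, \<mu> v) \<in> skolem_hull I"
  shows "sat (copy_interp I (skolem_hull I) h) (\<lambda>v. h (snd v, \<mu> v)) p = sat I \<mu> p"
  using assms(3,4)
proof (induction p arbitrary: \<mu>)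
  case (FEq s t)
  then have "wst s" "wst t" "sort_of s = sort_of t" by simp_all
  moreover have "(sort_of s, eval I \<mu> s) \<in> skolem_hull I" "(sort_of t, eval I \<mu> t) \<in> skolem_hull I"
    using eval_in_skolem_hull FEq.prems(2) calculation by blast+
  ultimately show ?case
    using eval_copy_interp[OF h FEq.prems(2)] inj_on_eq_iff[OF h] by simp
next
  case (FEx x s p)
  define N where "N = copy_interp I (skolem_hull I) h"
  have upd: "(\<lambda>v. h (snd v, \<mu> v))((x, s) := h (s, e)) = (\<lambda>v. h (snd v, (\<mu>((x, s) := e)) v))" for e
    by auto
  have IH: "sat N ((\<lambda>v. h (snd v, \<mu> v))((x, s) := h (s, e))) p = sat I (\<mu>((x, s) := e)) p"
    if "(s, e) \<in> skolem_hull I" for e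
    unfolding upd N_def by (rule FEx.IH) (use FEx.prems that in auto)
  have "sat N (\<lambda>v. h (snd v, \<mu> v)) (FEx x s p) \<longleftrightarrow>
      (\<exists>e. (s, e) \<in> skolem_hull I \<and> sat I (\<mu>((x, s) := e)) p)"
    using IH by (auto simp: N_def copy_interp_def)
  also have "\<dots> \<longleftrightarrow> sat I \<mu> (FEx x s p)"
    using skolem_hull_in_dm[OF I] witness_in_skolem_hull[OF FEx.prems(2)] by auto metis
  finally show ?case unfolding N_def .
qed simp_all

lemma inj_on_prescribe_in_sorts:
  fixes h :: "'s \<times> 'a \<Rightarrow> 'b"
  assumes h: "inj_on h D" and \<nu>: "\<And>s. \<nu> s \<in> elems_of_sort D s"
    and \<sigma>: "\<And>s. \<sigma> s \<in> (\<lambda>e. h (s, e)) ` elems_of_sort D s"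
  obtains h' where "inj_on h' D"
    "\<And>s. (\<lambda>e. h' (s, e)) ` elems_of_sort D s = (\<lambda>e. h (s, e)) ` elems_of_sort D s"
    "\<And>s. h' (s, \<nu> s) = \<sigma> s"
proof -
  from \<sigma> have "\<forall>s. \<exists>e. e \<in> elems_of_sort D s \<and> h (s, e) = \<sigma> s" by (metis imageE)
  then obtain \<epsilon> where \<epsilon>: "\<And>s. \<epsilon> s \<in> elems_of_sort D s" "\<And>s. h (s, \<epsilon> s) = \<sigma> s"
    by metis
  define \<tau> where "\<tau> s = transpose (\<nu> s) (\<epsilon> s)" for s
  have \<tau>_sort: "\<tau> s ` elems_of_sort D s = elems_of_sort D s" for s
    unfolding \<tau>_def by (rule transpose_image_eq) (use \<nu>[of s] \<epsilon>(1)[of s] in simp)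
  define h' where "h' = (\<lambda>(s, e). h (s, \<tau> s e))"
  have "inj_on h' D"
  proof (rule inj_onI)
    fix z z' assume z: "z \<in> D" "z' \<in> D" "h' z = h' z'"
    obtain s e s' e' where [simp]: "z = (s, e)" "z' = (s', e')" by fastforce
    have "\<tau> s e \<in> \<tau> s ` elems_of_sort D s" "\<tau> s' e' \<in> \<tau> s' ` elems_of_sort D s'"
      using z(1,2) by simp_all
    then have "(s, \<tau> s e) \<in> D" "(s', \<tau> s' e') \<in> D" unfolding \<tau>_sort by simp_all
    with z(3) have "(s, \<tau> s e) = (s', \<tau> s' e')"
      by (intro inj_onD[OF h]) (simp_all add: h'_def)
    then have "s = s'" "\<tau> s e = \<tau> s e'" by auto
    then show "z = z'" using transpose_eq_imp_eq[of "\<nu> s" "\<epsilon> s" e e'] by (simp add: \<tau>_def)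
  qed
  moreover have "(\<lambda>e. h' (s, e)) ` elems_of_sort D s = (\<lambda>e. h (s, e)) ` elems_of_sort D s" for s
  proof -
    have "(\<lambda>e. h' (s, e)) ` elems_of_sort D s = (\<lambda>e. h (s, e)) ` \<tau> s ` elems_of_sort D s"
      by (simp add: h'_def image_image)
    then show ?thesis by (simp only: \<tau>_sort)
  qed
  moreover have "h' (s, \<nu> s) = \<sigma> s" for s
    by (simp add: h'_def \<tau>_def \<epsilon>(2))
  ultimately show ?thesis by (rule that)
qed

lemma countable_inj_on_infinite:
  assumes "countable D" "infinite (UNIV :: 'b set)"
  obtains h :: "'a \<Rightarrow> 'b" where "inj_on h D"
proof -
  obtain g :: "nat \<Rightarrow> 'b" where "inj g"
    using infinite_countable_subset[OF assms(2)] by blast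
  then have "inj_on (g \<circ> to_nat_on D) D"
    using comp_inj_on[OF inj_on_to_nat_on[OF assms(1)]] inj_on_subset by blast
  then show ?thesis by (rule that)
qed

theorem downward_Loewenheim_Skolem:
  fixes I :: "'a interp"
  assumes I: "is_interp I" and inf: "infinite (UNIV :: 'b set)"
  obtains N :: "'b interp" where "is_interp N" "\<And>p. wf_fm p \<Longrightarrow> holds N p = holds I p"
proof -
  let ?D = "skolem_hull I"
  obtain h0 :: "sort \<times> 'a \<Rightarrow> 'b" where h0: "inj_on h0 ?D"
    using countable_inj_on_infinite[OF countable_skolem_hull inf] .
  define \<sigma> where "\<sigma> s = (SOME y. y \<in> (\<lambda>e. h0 (s, e)) ` elems_of_sort ?D s)" for s
  have \<sigma>: "\<sigma> s \<in> (\<lambda>e. h0 (s, e)) ` elems_of_sort ?D s" for s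
    unfolding \<sigma>_def by (rule someI[of _ "h0 (s, dflt I s)"]) (simp add: dflt_in_skolem_hull)
  obtain h where h: "inj_on h ?D"
    and img: "\<And>s. (\<lambda>e. h (s, e)) ` elems_of_sort ?D s = (\<lambda>e. h0 (s, e)) ` elems_of_sort ?D s"
    and dflt: "\<And>s. h (s, dflt I s) = \<sigma> s"
    by (rule inj_on_prescribe_in_sorts[OF h0 _ \<sigma>, of "dflt I"]) (auto simp: dflt_in_skolem_hull)
  define N where "N = copy_interp I ?D h"
  have "dflt N s = h (s, dflt I s)" for s
    unfolding dflt \<sigma>_def using img[of s] by (simp add: N_def copy_interp_def dflt_def)
  then have dval_N: "dval N = (\<lambda>v. h (snd v, dval I v))"
    by (auto simp: dval_def)
  have "holds N p = holds I p" if "wf_fm p" for p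
    unfolding holds_dval dval_N unfolding N_def
    by (rule sat_copy_interp[OF I h that]) (simp add: dval_def dflt_in_skolem_hull case_prod_beta)
  moreover have "is_interp N" unfolding N_def using h by (rule is_interp_copy_interp)
  ultimately show ?thesis using that by blast
qed

section \<open>Soundness of CAEXT\<close>

text \<open>
  The second alternative for \<open>\<langle>v\<rangle>\<close> is the link followed by \<^const>\<open>updidx\<close>: \<open>a\<close> and \<open>c\<close>
  differ by one write, so they need not be equal.
\<close>

definition sound_entry :: "'a itself \<Rightarrow> trm \<Rightarrow> trm \<Rightarrow> fm \<Rightarrow> trm \<Rightarrow> bool" where
  "sound_entry _ a t r c \<longleftrightarrow>
     wst a \<and> sort_of a = SArr \<and> wst c \<and> sort_of c = SArr \<and> wst t \<and> wf_fm r \<and>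
     (case t of
        Rd b i \<Rightarrow> \<forall>I :: 'a interp. array_interp I \<longrightarrow> holds I r \<longrightarrow>
                   rd I (tval I a) (tval I i) = rd I (tval I c) (tval I i)
      | CA v \<Rightarrow> (r = FTop \<and> (\<exists>j u. c = Wr a j u \<or> a = Wr c j u)) \<or>
                (\<forall>I :: 'a interp. array_interp I \<longrightarrow> holds I r \<longrightarrow> tval I a = tval I c)
      | _ \<Rightarrow> False)"

definition sound_map :: "'a itself \<Rightarrow> pimap \<Rightarrow> bool" where
  "sound_map X \<pi> \<longleftrightarrow> (\<forall>a t r c. \<pi> (a, t) = Some (r, c) \<longrightarrow> sound_entry X a t r c)"

lemma sound_map_pi0: "sound_map X pi0"
  by (simp add: sound_map_def pi0_def)

lemma sound_map_upd:
  "sound_map X \<pi> \<Longrightarrow> sound_entry X a t r c \<Longrightarrow> sound_map X (\<pi>((a, t) := Some (r, c)))"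
  by (simp add: sound_map_def)

lemma sound_mapD: "sound_map X \<pi> \<Longrightarrow> \<pi> (a, t) = Some (r, c) \<Longrightarrow> sound_entry X a t r c"
  by (simp add: sound_map_def)

lemma sound_map_key:
  assumes "sound_map X \<pi>" "\<pi> (a, t) \<noteq> None"
  shows "wst a" "sort_of a = SArr" "wst t"
  using assms unfolding sound_map_def sound_entry_def by fastforce+

lemma sound_entry_refl_read:
  "wst a \<Longrightarrow> sort_of a = SArr \<Longrightarrow> wst (Rd b i) \<Longrightarrow> sound_entry X a (Rd b i) FTop a"
  by (simp add: sound_entry_def)

lemma sound_entry_row:
  assumes "wst (Wr a j u)" "wst (Rd b i)"
  shows "sound_entry TYPE('a) a (Rd b i) (FNot (FEq i j)) (Wr a j u)"
    and "sound_entry TYPE('a) (Wr a j u) (Rd b i) (FNot (FEq i j)) a"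
proof -
  have "rd I (tval I (Wr a j u)) (tval I i) = rd I (tval I a) (tval I i)"
    if "array_interp I" "tval I i \<noteq> tval I j" for I :: "'a interp"
    using rd_wr_other[OF that(1) assms(1)] tval_in_dm_sort[OF array_interp_is_interp[OF that(1)]]
      assms(2) that(2) by simp
  then show "sound_entry TYPE('a) a (Rd b i) (FNot (FEq i j)) (Wr a j u)"
    "sound_entry TYPE('a) (Wr a j u) (Rd b i) (FNot (FEq i j)) a"
    using assms by (auto simp: sound_entry_def)
qed

lemma sound_entry_eq:
  assumes "wst a" "sort_of a = SArr" "wst c" "sort_of c = SArr" "wst t"
    and "(\<exists>b i. t = Rd b i) \<or> (\<exists>v. t = CA v)"
  shows "sound_entry X c t (FEq a c) a" "sound_entry X a t (FEq a c) c"
  using assms by (auto simp: sound_entry_def)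

lemma sound_entry_init_const: "wst (CA v) \<Longrightarrow> sound_entry X (CA v) (CA v) FTop (CA v)"
  by (simp add: sound_entry_def)

lemma sound_entry_write_const:
  assumes "wst (Wr a j u)" "wst (CA v)"
  shows "sound_entry X a (CA v) FTop (Wr a j u)" "sound_entry X (Wr a j u) (CA v) FTop a"
  using assms by (auto simp: sound_entry_def)

lemma reason_wf: "reason \<pi> a t r \<Longrightarrow> sound_map X \<pi> \<Longrightarrow> wf_fm r"
  by (induction rule: reason.induct) (auto dest: sound_mapD simp: sound_entry_def)

lemma reason_read_eq:
  fixes I :: "'a interp"
  assumes "reason \<pi> a (Rd b i) r" "sound_map TYPE('a) \<pi>" "array_interp I" "holds I r"
  shows "rd I (tval I a) (tval I i) = rd I (tval I b) (tval I i)"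
proof -
  have "rd I (tval I a) (tval I i) = rd I (tval I b) (tval I i)"
    if "reason \<pi> a t r" "t = Rd b i" "holds I r" for a t r
    using that
  proof (induction arbitrary: b i rule: reason.induct)
    case (rbase a t)
    then show ?case using sound_map_key(2)[OF assms(2) rbase(1)] by auto
  next
    case (rstep a t r c p)
    have "rd I (tval I a) (tval I i) = rd I (tval I c) (tval I i)"
      using sound_mapD[OF assms(2) rstep(1)] assms(3) rstep.prems by (auto simp: sound_entry_def)
    also have "\<dots> = rd I (tval I b) (tval I i)" using rstep by simp
    finally show ?case .
  qed
  then show ?thesis using assms(1,4) by blast
qed

lemma updidx_indices: "updidx \<pi> a t K \<Longrightarrow> sound_map X \<pi> \<Longrightarrow> k \<in> K \<Longrightarrow> wst k \<and> sort_of k = SIdx"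
proof (induction arbitrary: k rule: updidx.induct)
  case (uwr a t b j K)
  have "sound_entry X a t FTop b" using sound_mapD[OF uwr.prems(1) uwr.hyps(1)] .
  then have "wst j \<and> sort_of j = SIdx" using uwr.hyps(3) by (auto simp: sound_entry_def)
  then show ?case using uwr by auto
qed auto

text \<open>
  Along the chain of \<open>\<pi>\<close> from \<open>a\<close> to \<open>\<langle>v\<rangle>\<close>, single writes occur at indices in \<open>K\<close>, which \<open>d\<close>
  avoids, and every other link is an array equality entailed by the reason.
\<close>

lemma reason_read_const:
  fixes I :: "'a interp"
  assumes "updidx \<pi> a (CA v) K" "reason \<pi> a (CA v) r" "sound_map TYPE('a) \<pi>"
    and I: "array_interp I" "holds I r"
    and d: "d \<in> dm I SIdx" "\<forall>k\<in>K. d \<noteq> tval I k"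
  shows "rd I (tval I a) d = tval I v"
proof -
  have "rd I (tval I a) d = tval I v"
    if "updidx \<pi> a t K" "t = CA v" "reason \<pi> a t r" "holds I r" "\<forall>k\<in>K. d \<noteq> tval I k" for a t K r
    using that
  proof (induction arbitrary: r rule: updidx.induct)
    case (ubase a t)
    then show ?case using rd_ca[OF I(1) _ d(1)] sound_map_key(1)[OF assms(3) ubase(1)] by simp
  next
    case (uwr a t b j K)
    from uwr.prems(2) obtain p where p: "reason \<pi> b t p" "r = FAnd p FTop"
      by (cases rule: reason.cases) (use uwr in auto)
    have IH: "rd I (tval I b) d = tval I v" using uwr p by auto
    have e: "sound_entry TYPE('a) a t FTop b" using sound_mapD[OF assms(3) uwr.hyps(1)] .
    from uwr.hyps(3) obtain u where "b = Wr a j u \<or> a = Wr b j u" by blast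
    then have "rd I (tval I a) d = rd I (tval I b) d"
      using rd_wr_other[OF I(1) _ d(1)] e uwr.prems(4) by (auto simp: sound_entry_def)
    then show ?case using IH by simp
  next
    case (uoth a t r0 c K)
    from uoth.prems(2) obtain p where p: "reason \<pi> c t p" "r = FAnd p r0"
      by (cases rule: reason.cases) (use uoth in auto)
    have "sound_entry TYPE('a) a t r0 c" using sound_mapD[OF assms(3) uoth.hyps(1)] .
    then have "tval I a = tval I c"
      using uoth.hyps(3) uoth.prems(1,3) p(2) I(1) by (auto simp: sound_entry_def)
    then show ?case using uoth p by auto
  qed
  then show ?thesis using assms(1,2) I(2) d(2) by blast
qed

lemma wf_conjs: "(\<And>p. p \<in> set ps \<Longrightarrow> wf_fm p) \<Longrightarrow> wf_fm (conjs ps)"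
  by (induction ps) (simp_all add: conjs_def)

lemma sat_conjs: "sat I \<mu> (conjs ps) \<longleftrightarrow> (\<forall>p\<in>set ps. sat I \<mu> p)"
  by (induction ps) (simp_all add: conjs_def)

lemma reason_defined: "reason \<pi> a t r \<Longrightarrow> \<pi> (a, t) \<noteq> None"
  by (cases rule: reason.cases) auto

definition array_valid :: "'a itself \<Rightarrow> fm \<Rightarrow> bool" where
  "array_valid _ p \<longleftrightarrow> wf_fm p \<and> (\<forall>I :: 'a interp. array_interp I \<longrightarrow> holds I p)"

lemma CongR_lemma_valid:
  assumes "sound_map TYPE('a) \<pi>" "reason \<pi> a (Rd b i) r1" "reason \<pi> a (Rd c k) r2"
  shows "array_valid TYPE('a) (FImp (FAnd r1 (FAnd r2 (FEq i k))) (FEq (Rd b i) (Rd c k)))"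
proof -
  have "holds I (FImp (FAnd r1 (FAnd r2 (FEq i k))) (FEq (Rd b i) (Rd c k)))"
    if "array_interp I" for I :: "'a interp"
    using reason_read_eq[OF assms(2,1) that] reason_read_eq[OF assms(3,1) that] by auto
  moreover have "wst (Rd b i)" "wst (Rd c k)"
    using sound_map_key(3)[OF assms(1) reason_defined[OF assms(2)]]
      sound_map_key(3)[OF assms(1) reason_defined[OF assms(3)]] .
  ultimately show ?thesis
    using reason_wf[OF assms(2,1)] reason_wf[OF assms(3,1)] by (simp add: array_valid_def)
qed

lemma Roc_lemma_valid:
  assumes "sound_map TYPE('a) \<pi>" "reason \<pi> (CA v) (Rd b i) r"
  shows "array_valid TYPE('a) (FImp r (FEq (Rd b i) v))"
proof -
  have "wst (CA v)" "wst (Rd b i)" using sound_map_key[OF assms(1) reason_defined[OF assms(2)]] by simp_all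
  moreover have "rd I (tval I (CA v)) (tval I i) = tval I v" if "array_interp I" for I :: "'a interp"
    using rd_ca[OF that] tval_in_dm_sort[OF array_interp_is_interp[OF that]] calculation by simp
  ultimately show ?thesis
    using reason_wf[OF assms(2,1)] reason_read_eq[OF assms(2,1)] by (auto simp: array_valid_def)
qed

lemma CongC_lemma_valid:
  assumes \<pi>: "sound_map TYPE('a) \<pi>"
    and K: "updidx \<pi> a (CA v) K1" "updidx \<pi> a (CA w) K2" "set ks = K1 \<union> K2"
      "\<forall>k\<in>set ks. (x, SIdx) \<notin> tvars k"
    and r: "reason \<pi> a (CA v) r1" "reason \<pi> a (CA w) r2"
  shows "array_valid TYPE('a)
    (FImp (FAnd r1 (FAnd r2 (FEx x SIdx (conjs (map (\<lambda>k. FNot (FEq (Var x SIdx) k)) ks))))) (FEq v w))"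
proof -
  have "tval I v = tval I w"
    if I: "array_interp I" "holds I r1" "holds I r2"
      and d: "d \<in> dm I SIdx" "\<forall>k\<in>set ks. d \<noteq> eval I ((dval I)((x, SIdx) := d)) k"
    for I :: "'a interp" and d
  proof -
    have "eval I ((dval I)((x, SIdx) := d)) k = tval I k" if "k \<in> set ks" for k
      unfolding tval_def by (rule eval_cong) (use K(4) that in auto)
    then have "\<forall>k\<in>K1 \<union> K2. d \<noteq> tval I k" using d(2) K(3) by auto
    then show ?thesis
      using reason_read_const[OF K(1) r(1) \<pi> I(1,2) d(1)] reason_read_const[OF K(2) r(2) \<pi> I(1,3) d(1)]
      by simp
  qed
  moreover have "\<forall>k\<in>set ks. wst k \<and> sort_of k = SIdx"
    using updidx_indices[OF K(1) \<pi>] updidx_indices[OF K(2) \<pi>] K(3) by auto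
  ultimately show ?thesis
    using reason_wf[OF r(1) \<pi>] reason_wf[OF r(2) \<pi>]
      sound_map_key(3)[OF \<pi> reason_defined[OF r(1)]] sound_map_key(3)[OF \<pi> reason_defined[OF r(2)]]
    by (auto simp: array_valid_def holds_dval tval_def sat_conjs intro!: wf_conjs)
qed

lemma DisEq_lemma_satisfiable:
  fixes I :: "'a interp"
  assumes I: "array_interp I" "\<forall>q\<in>A. holds I q"
    and ac: "a \<in> T A" "c \<in> T A" "wst a" "sort_of a = SArr" "wst c" "sort_of c = SArr"
    and fresh: "Cst (Kc a c) SIdx \<notin> T A"
  obtains I' :: "'a interp" where "array_interp I'" "\<forall>q\<in>A. holds I' q"
    "holds I' (FImp (FNot (FEq a c)) (FNot (FEq (Rd a (Cst (Kc a c) SIdx)) (Rd c (Cst (Kc a c) SIdx)))))"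
proof -
  obtain d where d: "d \<in> dm I SIdx" "tval I a \<noteq> tval I c \<Longrightarrow> rd I (tval I a) d \<noteq> rd I (tval I c) d"
  proof (cases "tval I a = tval I c")
    case True
    then show ?thesis using that dflt_in_dm[OF array_interp_is_interp[OF I(1)]] by blast
  next
    case False
    then show ?thesis using that array_ext[OF I(1) ac(3-6)] by metis
  qed
  define I' where "I' = upd_cst I (Kc a c) SIdx d"
  have "Cst (Kc a c) SIdx \<notin> subt a" "Cst (Kc a c) SIdx \<notin> subt c"
    using subt_T[OF ac(1)] subt_T[OF ac(2)] fresh by auto
  then have "tval I' a = tval I a" "tval I' c = tval I c"
    unfolding I'_def by (simp_all add: tval_upd_cst)
  then have "holds I' (FImp (FNot (FEq a c)) (FNot (FEq (Rd a (Cst (Kc a c) SIdx)) (Rd c (Cst (Kc a c) SIdx)))))"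
    using d(2) by (simp add: I'_def)
  then show ?thesis using that fresh_cst_model[OF I fresh d(1)] unfolding I'_def by blast
qed

definition sound_cfg :: "'a itself \<Rightarrow> 'u cfg \<Rightarrow> bool" where
  "sound_cfg X cf \<longleftrightarrow> (case cf of
     Unsat \<Rightarrow> False
   | Cfg A _ \<pi> \<Rightarrow> (\<forall>p\<in>A. wf_fm p) \<and> array_satisfiable X A \<and> sound_map X \<pi>)"

lemma sound_cfg_simps:
  "\<not> sound_cfg X Unsat"
  "sound_cfg X (Cfg A J \<pi>) \<longleftrightarrow> (\<forall>p\<in>A. wf_fm p) \<and> array_satisfiable X A \<and> sound_map X \<pi>"
  by (simp_all add: sound_cfg_def)

lemma sound_cfg_extend:
  "sound_cfg X (Cfg A J \<pi>) \<Longrightarrow> sound_entry X a t r c \<Longrightarrow> sound_cfg X (Cfg A J' (\<pi>((a, t) := Some (r, c))))"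
  by (simp add: sound_cfg_simps sound_map_upd)

lemma sound_cfg_add_valid:
  assumes "sound_cfg TYPE('a) (Cfg A J \<pi>)" "array_valid TYPE('a) p" "add_fm A p A'"
  shows "sound_cfg TYPE('a) (Cfg A' J' pi0)"
proof -
  obtain I :: "'a interp" where I: "array_interp I" "\<forall>q\<in>A. holds I q"
    using assms(1) by (auto simp: sound_cfg_simps array_satisfiable_def)
  have "\<forall>q\<in>A. wf_fm q" "wf_fm p" "holds I p"
    using assms(1,2) I(1) by (simp_all add: sound_cfg_simps array_valid_def)
  from add_fm_sound[OF assms(3) this(1,2) I this(3)]
  show ?thesis using sound_map_pi0 by (simp add: sound_cfg_simps)
qed

lemma sound_cfg_DisEq:
  assumes sound: "sound_cfg TYPE('a) (Cfg A J \<pi>)" and ac: "a \<in> TA A" "c \<in> TA A"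
    and fresh: "Cst (Kc a c) SIdx \<notin> T A"
    and add: "add_fm A (FImp (FNot (FEq a c))
      (FNot (FEq (Rd a (Cst (Kc a c) SIdx)) (Rd c (Cst (Kc a c) SIdx))))) A'"
  shows "sound_cfg TYPE('a) (Cfg A' J' pi0)"
proof -
  have wf: "\<forall>p\<in>A. wf_fm p" using sound by (simp add: sound_cfg_simps)
  have ac': "a \<in> T A" "c \<in> T A" "wst a" "sort_of a = SArr" "wst c" "sort_of c = SArr"
    using ac wst_T[OF wf] by (auto simp: TA_def)
  obtain I :: "'a interp" where "array_interp I" "\<forall>q\<in>A. holds I q"
    using sound by (auto simp: sound_cfg_simps array_satisfiable_def)
  from DisEq_lemma_satisfiable[OF this ac' fresh] obtain I' :: "'a interp"
    where "array_interp I'" "\<forall>q\<in>A. holds I' q"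
      "holds I' (FImp (FNot (FEq a c)) (FNot (FEq (Rd a (Cst (Kc a c) SIdx)) (Rd c (Cst (Kc a c) SIdx)))))" .
  from add_fm_sound[OF add wf _ this] show ?thesis
    using ac' sound_map_pi0 by (simp add: sound_cfg_simps)
qed

lemma W_valid:
  assumes "\<forall>p\<in>A. wf_fm p" "array_interp I" "q \<in> W A"
  shows "wf_fm q" "holds I q"
proof -
  from assms(3) obtain a i u where q: "q = FEq (Rd (Wr a i u) i) u" "Wr a i u \<in> T A"
    unfolding W_def by blast
  have "wst (Wr a i u)" using wst_T[OF assms(1) q(2)] .
  then show "wf_fm q" "holds I q" using q rd_wr_same[OF assms(2)] by simp_all
qed

lemma sound_cfg_has_model:
  assumes "sound_cfg TYPE('a) (Cfg A J \<pi>)" "infinite (UNIV :: 'u set)"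
  obtains N :: "'u interp" where "models N (A \<union> W A)"
proof -
  obtain I :: "'a interp" where I: "array_interp I" "\<forall>q\<in>A. holds I q" and wf: "\<forall>p\<in>A. wf_fm p"
    using assms(1) by (auto simp: sound_cfg_simps array_satisfiable_def)
  obtain N :: "'u interp" where "is_interp N" "\<And>p. wf_fm p \<Longrightarrow> holds N p = holds I p"
    using downward_Loewenheim_Skolem[OF array_interp_is_interp[OF I(1)] assms(2)] by blast
  then have "models N (A \<union> W A)"
    using I wf W_valid[OF wf I(1)] by (auto simp: models_def)
  then show ?thesis by (rule that)
qed

lemma step_preserves_sound_cfg:
  assumes step: "step cf cf'" and sound: "sound_cfg TYPE('a) cf" and inf: "infinite (UNIV :: 'u set)"
  shows "sound_cfg TYPE('a) (cf' :: 'u cfg)"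
proof -
  have smap: "sound_map TYPE('a) \<pi>" if "cf = Cfg A J \<pi>" for A J \<pi>
    using sound that by (simp add: sound_cfg_simps)
  have wst: "wst u" if "cf = Cfg A J \<pi>" "u \<in> T A" for A J \<pi> u
    using sound that wst_T by (auto simp: sound_cfg_simps)
  have key: "wst a" "sort_of a = SArr" "wst t" if "cf = Cfg A J \<pi>" "\<pi> (a, t) \<noteq> None" for A J \<pi> a t
    using sound_map_key[OF smap[OF that(1)] that(2)] by simp_all
  from step show ?thesis
  proof cases
    case (Conf A I \<pi>)
    then show ?thesis using sound_cfg_has_model[OF sound[unfolded Conf(1)] inf] by blast
  next
    case (InitR a i A I \<pi>)
    then show ?thesis using sound wst[OF InitR(1,3)] by (auto intro!: sound_cfg_extend sound_entry_refl_read)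
  next
    case (InitW a i u A I \<pi>)
    then show ?thesis using sound wst[OF InitW(1,3)] by (auto intro!: sound_cfg_extend sound_entry_refl_read)
  next
    case (RowD J i j \<pi> a u b A)
    then show ?thesis using sound key[OF RowD(1,4)] by (auto intro!: sound_cfg_extend sound_entry_row)
  next
    case (RowU J i j a u A \<pi> b)
    then show ?thesis using sound wst[OF RowU(1,4)] key[OF RowU(1,5)]
      by (auto intro!: sound_cfg_extend sound_entry_row)
  next
    case (EqR J a c A \<pi> b i)
    then show ?thesis using sound wst[OF EqR(1)] key[OF EqR(1,7)]
      by (auto simp: TA_def intro!: sound_cfg_extend sound_entry_eq)
  next
    case (EqL J a c A \<pi> b i)
    then show ?thesis using sound wst[OF EqL(1)] key[OF EqL(1,7)]
      by (auto simp: TA_def intro!: sound_cfg_extend sound_entry_eq)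
  next
    case (CongR J i k \<pi> a b c r1 r2 A A')
    show ?thesis unfolding CongR(2) using sound[unfolded CongR(1)]
      by (rule sound_cfg_add_valid[OF _ CongR_lemma_valid[OF smap[OF CongR(1)] CongR(7,8)] CongR(9)])
  next
    case (DisEq J a c A A' \<pi>)
    show ?thesis unfolding DisEq(2) using sound[unfolded DisEq(1)]
      by (rule sound_cfg_DisEq[OF _ DisEq(4,5,7,9)])
  next
    case (Roc \<pi> v b i J r A A')
    show ?thesis unfolding Roc(2) using sound[unfolded Roc(1)]
      by (rule sound_cfg_add_valid[OF _ Roc_lemma_valid[OF smap[OF Roc(1)] Roc(5)] Roc(6)])
  next
    case (InitC v A I \<pi>)
    then show ?thesis using sound wst[OF InitC(1,3)] by (auto intro!: sound_cfg_extend sound_entry_init_const)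
  next
    case (CowD \<pi> a j u v K J A)
    then show ?thesis using sound key[OF CowD(1,3)] by (auto intro!: sound_cfg_extend sound_entry_write_const)
  next
    case (CowU \<pi> a v j u A K J)
    then show ?thesis using sound key[OF CowU(1,3)] wst[OF CowU(1,5)]
      by (auto intro!: sound_cfg_extend sound_entry_write_const)
  next
    case (CEqR J a c A \<pi> v)
    then show ?thesis using sound wst[OF CEqR(1)] key[OF CEqR(1,7)]
      by (auto simp: TA_def intro!: sound_cfg_extend sound_entry_eq)
  next
    case (CEqL J a c A \<pi> v)
    then show ?thesis using sound wst[OF CEqL(1)] key[OF CEqL(1,7)]
      by (auto simp: TA_def intro!: sound_cfg_extend sound_entry_eq)
  next
    case (CongC \<pi> a v w J K1 K2 r1 r2 ks x A A')
    show ?thesis unfolding CongC(2) using sound[unfolded CongC(1)]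
      by (rule sound_cfg_add_valid[OF _ CongC_lemma_valid[OF smap[OF CongC(1)] CongC(6,7,11,12,9,10)] CongC(13)])
  qed (use sound in \<open>simp add: sound_cfg_simps\<close>)
qed

theorem mainTheorem1:
  fixes A :: "fm set"
  assumes "infinite (UNIV :: 'u set)"
    and "finite A"
    and "\<forall>p\<in>A. wf_fm p \<and> closed p \<and> flat_fm p"
    and "(step :: 'u cfg \<Rightarrow> 'u cfg \<Rightarrow> bool)\<^sup>*\<^sup>* (init_cfg A) Unsat"
  shows "\<not> (\<exists>I :: 'v interp. array_interp I \<and> (\<forall>p\<in>A. holds I p))"
proof
  assume "\<exists>I :: 'v interp. array_interp I \<and> (\<forall>p\<in>A. holds I p)"
  then have "sound_cfg TYPE('v) (init_cfg A :: 'u cfg)"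
    using assms(3) by (simp add: sound_cfg_simps init_cfg_def array_satisfiable_def sound_map_pi0)
  with assms(4) have "sound_cfg TYPE('v) (Unsat :: 'u cfg)"
    by (induction rule: rtranclp_induct) (auto intro: step_preserves_sound_cfg[OF _ _ assms(1)])
  then show False by (simp add: sound_cfg_simps)
qed

end
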